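(* Under the Lyapunov condition, for every $x,y\in\mathbb{R}$, \[ \lim_{n\to\infty}\left|\mathbb{P}\Big(\bigcap_{k=1}^{n-1}\{x<|\lambda^{(n)}_k|\le \mathfrak{b}_n y+\mathfrak{a}_n\}\Big)-\mathbb{P}\Big(\bigcap_{k=0}^{n-1}\{x<|\lambda^{(n)}_k|\le \mathfrak{b}_n y+\mathfrak{a}_n\}\Big)\right|=0. \]
   Context: Lyapunov condition: $(\xi_j)_{j\in\mathbb{N}_0}$ is a sequence of i.i.d. non-degenerate real random variables on a probability space $(\Omega,\mathcal{F},\mathbb{P})$ with $\mathbb{E}[\xi_0]=0$, $\mathbb{E}[\xi_0^2]=1$, and there is $\delta>0$ with $\mathbb{E}[|\xi_0|^{2+\delta}]<\infty$. With $\omega_n=\exp(2\pi\mathsf{i}/n)$, $\lambda^{(n)}_k=\sum_{j=0}^{n-1}\xi_j\omega_n^{kj}$. $\mathfrak{a}_n=\sqrt{n\ln(n/2)}$, $\mathfrak{b}_n=\frac12\sqrt{n/\ln(n/2)}$ for $n\ge3$. *)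

theory Defs
  imports "HOL-Probability.Probability"
begin

definition dft_coeff :: "(nat \<Rightarrow> 'a \<Rightarrow> real) \<Rightarrow> nat \<Rightarrow> nat \<Rightarrow> 'a \<Rightarrow> complex" where
  "dft_coeff \<xi> n k \<omega> =
     (\<Sum>j<n. complex_of_real (\<xi> j \<omega>) * (exp (2 * pi * \<i> / of_nat n)) ^ (k * j))"

definition frak_a :: "nat \<Rightarrow> real" where
  "frak_a n = sqrt (real n * ln (real n / 2))"

definition frak_b :: "nat \<Rightarrow> real" where
  "frak_b n = (1/2) * sqrt (real n / ln (real n / 2))"

end

theory Submission
  imports Defs "HOL-Real_Asymp.Real_Asymp"
begin

text \<open>The coefficient \<lambda>_0 is the partial sum S_n = \<xi>_0 + ... + \<xi>_(n-1), so the two events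
  differ only where |S_n| \<le> x or |S_n| > b_n y + a_n. By the central limit theorem S_n / sqrt n is
  asymptotically standard normal, whereas x / sqrt n \<rightarrow> 0 and (b_n y + a_n) / sqrt n \<rightarrow> \<infinity>;
  hence both exceptional events have vanishing probability.\<close>

lemma cmod_dft_coeff_0: "cmod (dft_coeff \<xi> n 0 \<omega>) = \<bar>\<Sum>j<n. \<xi> j \<omega>\<bar>"
  unfolding dft_coeff_def by (simp flip: of_real_sum)

lemma isCont_cdf_std_normal: "isCont (cdf std_normal_distribution) t"
proof -
  have "emeasure std_normal_distribution {t} = 0"
    by (simp add: emeasure_density nn_integral_null_set)
  then show ?thesis
    using finite_borel_measure.isCont_cdf[OF real_distribution.finite_borel_measure_M[OF real_dist_normal_dist]]
    by (simp add: measure_def)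
qed

lemma identically_distributed_integral:
  fixes X Y :: "'a \<Rightarrow> real" and g :: "real \<Rightarrow> real"
  assumes "distr M borel X = distr M borel Y"
    and [measurable]: "X \<in> borel_measurable M" "Y \<in> borel_measurable M" "g \<in> borel_measurable borel"
  shows "integrable M (\<lambda>\<omega>. g (X \<omega>)) \<longleftrightarrow> integrable M (\<lambda>\<omega>. g (Y \<omega>))"
    and "(\<integral>\<omega>. g (X \<omega>) \<partial>M) = (\<integral>\<omega>. g (Y \<omega>) \<partial>M)"
proof -
  have "integrable (distr M borel Z) g \<longleftrightarrow> integrable M (\<lambda>\<omega>. g (Z \<omega>))"
    if [measurable]: "Z \<in> borel_measurable M" for Z :: "'a \<Rightarrow> real"
    by (rule integrable_distr_eq) measurable
  then show "integrable M (\<lambda>\<omega>. g (X \<omega>)) \<longleftrightarrow> integrable M (\<lambda>\<omega>. g (Y \<omega>))"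
    using assms by metis
  have "integral\<^sup>L (distr M borel Z) g = (\<integral>\<omega>. g (Z \<omega>) \<partial>M)"
    if [measurable]: "Z \<in> borel_measurable M" for Z :: "'a \<Rightarrow> real"
    by (rule integral_distr) measurable
  then show "(\<integral>\<omega>. g (X \<omega>) \<partial>M) = (\<integral>\<omega>. g (Y \<omega>) \<partial>M)"
    using assms by metis
qed

lemma (in finite_measure) measure_diff_Int_le:
  assumes "A \<in> sets M" "C \<in> sets M"
  shows "\<bar>measure M A - measure M (A \<inter> C)\<bar> \<le> measure M (space M - C)"
proof -
  have "measure M A - measure M (A \<inter> C) = measure M (A - A \<inter> C)"
    using assms by (subst finite_measure_Diff) auto
  also have "\<dots> \<le> measure M (space M - C)"
    using assms sets.sets_into_space by (intro finite_measure_mono) auto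
  finally show ?thesis
    using assms by (simp add: finite_measure_mono)
qed

lemma (in finite_measure) measure_interval_eq_diff:
  fixes f :: "'a \<Rightarrow> real"
  assumes [measurable]: "f \<in> borel_measurable M" and "a \<le> b"
  shows "measure M {\<omega>\<in>space M. a < f \<omega> \<and> f \<omega> \<le> b}
    = measure M {\<omega>\<in>space M. f \<omega> \<le> b} - measure M {\<omega>\<in>space M. f \<omega> \<le> a}"
proof -
  have "{\<omega>\<in>space M. a < f \<omega> \<and> f \<omega> \<le> b} = {\<omega>\<in>space M. f \<omega> \<le> b} - {\<omega>\<in>space M. f \<omega> \<le> a}"
    by auto
  then show ?thesis
    using \<open>a \<le> b\<close> by (simp add: finite_measure_Diff subset_eq)
qed

lemma (in prob_space) prob_abs_le_tendsto_0:
  fixes Z :: "nat \<Rightarrow> 'a \<Rightarrow> real" and F :: "real \<Rightarrow> real"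
  assumes [measurable]: "\<And>n. Z n \<in> borel_measurable M"
    and cdf: "\<And>t. (\<lambda>n. prob {\<omega>\<in>space M. Z n \<omega> \<le> t}) \<longlonglongrightarrow> F t"
    and "isCont F 0" and "a \<longlonglongrightarrow> 0"
  shows "(\<lambda>n. prob {\<omega>\<in>space M. \<bar>Z n \<omega>\<bar> \<le> a n}) \<longlonglongrightarrow> 0"
proof (rule order_tendstoI)
  fix \<eta> :: real assume "\<eta> > 0"
  have "((\<lambda>e. F (- e)) \<longlongrightarrow> F 0) (at 0)"
    using isCont_tendsto_compose[OF \<open>isCont F 0\<close> tendsto_minus[OF tendsto_ident_at, of 0, simplified]] .
  then have "((\<lambda>e. F e - F (- e)) \<longlongrightarrow> F 0 - F 0) (at 0)"
    using \<open>isCont F 0\<close> by (intro tendsto_diff) (simp_all add: isCont_def)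
  then have "\<forall>\<^sub>F e in at 0. F e - F (- e) < \<eta>"
    using \<open>\<eta> > 0\<close> by (intro order_tendstoD) auto
  then obtain d where "d > 0" and d: "\<And>e. e \<noteq> 0 \<Longrightarrow> \<bar>e\<bar> < d \<Longrightarrow> F e - F (- e) < \<eta>"
    by (auto simp: eventually_at dist_real_def)
  define e where "e = d / 2"
  have "e > 0" "F e - F (- e) < \<eta>"
    using \<open>d > 0\<close> d[of e] by (simp_all add: e_def)
  have "(\<lambda>n. prob {\<omega>\<in>space M. Z n \<omega> \<le> e} - prob {\<omega>\<in>space M. Z n \<omega> \<le> - e}) \<longlonglongrightarrow> F e - F (- e)"
    by (intro tendsto_diff cdf)
  then have "\<forall>\<^sub>F n in sequentially. prob {\<omega>\<in>space M. Z n \<omega> \<le> e} - prob {\<omega>\<in>space M. Z n \<omega> \<le> - e} < \<eta>"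
    using \<open>F e - F (- e) < \<eta>\<close> by (rule order_tendstoD)
  moreover have "\<forall>\<^sub>F n in sequentially. a n < e"
    using \<open>a \<longlonglongrightarrow> 0\<close> \<open>e > 0\<close> by (rule order_tendstoD)
  ultimately show "\<forall>\<^sub>F n in sequentially. prob {\<omega>\<in>space M. \<bar>Z n \<omega>\<bar> \<le> a n} < \<eta>"
  proof eventually_elim
    case (elim n)
    have "prob {\<omega>\<in>space M. \<bar>Z n \<omega>\<bar> \<le> a n} \<le> prob {\<omega>\<in>space M. - e < Z n \<omega> \<and> Z n \<omega> \<le> e}"
      using elim by (intro finite_measure_mono) auto
    also have "\<dots> = prob {\<omega>\<in>space M. Z n \<omega> \<le> e} - prob {\<omega>\<in>space M. Z n \<omega> \<le> - e}"
      using \<open>e > 0\<close> by (intro measure_interval_eq_diff) auto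
    finally show ?case
      using elim by linarith
  qed
qed (auto intro: always_eventually less_le_trans[OF _ measure_nonneg])

lemma (in prob_space) prob_abs_gt_tendsto_0:
  fixes Z :: "nat \<Rightarrow> 'a \<Rightarrow> real" and F :: "real \<Rightarrow> real"
  assumes [measurable]: "\<And>n. Z n \<in> borel_measurable M"
    and cdf: "\<And>t. (\<lambda>n. prob {\<omega>\<in>space M. Z n \<omega> \<le> t}) \<longlonglongrightarrow> F t"
    and "(F \<longlongrightarrow> 1) at_top" "(F \<longlongrightarrow> 0) at_bot" and "filterlim b at_top sequentially"
  shows "(\<lambda>n. prob {\<omega>\<in>space M. b n < \<bar>Z n \<omega>\<bar>}) \<longlonglongrightarrow> 0"
proof (rule order_tendstoI)
  fix \<eta> :: real assume "\<eta> > 0"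
  have "((\<lambda>K. F (- K)) \<longlongrightarrow> 0) at_top"
    using \<open>(F \<longlongrightarrow> 0) at_bot\<close> filterlim_uminus_at_bot_at_top by (rule filterlim_compose)
  then have "\<forall>\<^sub>F K in at_top. 1 - \<eta> / 2 < F K \<and> F (- K) < \<eta> / 2 \<and> 0 \<le> K"
    using \<open>(F \<longlongrightarrow> 1) at_top\<close> \<open>\<eta> > 0\<close>
    by (intro eventually_conj order_tendstoD eventually_ge_at_top) auto
  then obtain K where K: "1 - \<eta> / 2 < F K" "F (- K) < \<eta> / 2" "0 \<le> K"
    by (auto simp: eventually_at_top_linorder)
  have "\<forall>\<^sub>F n in sequentially. 1 - \<eta> / 2 < prob {\<omega>\<in>space M. Z n \<omega> \<le> K}"
    using cdf K(1) by (rule order_tendstoD)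
  moreover have "\<forall>\<^sub>F n in sequentially. prob {\<omega>\<in>space M. Z n \<omega> \<le> - K} < \<eta> / 2"
    using cdf K(2) by (rule order_tendstoD)
  moreover have "\<forall>\<^sub>F n in sequentially. K < b n"
    using \<open>filterlim b at_top sequentially\<close> by (simp add: filterlim_at_top_dense)
  ultimately show "\<forall>\<^sub>F n in sequentially. prob {\<omega>\<in>space M. b n < \<bar>Z n \<omega>\<bar>} < \<eta>"
  proof eventually_elim
    case (elim n)
    have "prob {\<omega>\<in>space M. b n < \<bar>Z n \<omega>\<bar>} \<le> prob (space M - {\<omega>\<in>space M. - K < Z n \<omega> \<and> Z n \<omega> \<le> K})"
      using elim by (intro finite_measure_mono) auto
    also have "\<dots> = 1 - (prob {\<omega>\<in>space M. Z n \<omega> \<le> K} - prob {\<omega>\<in>space M. Z n \<omega> \<le> - K})"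
      using K(3) by (simp add: prob_compl measure_interval_eq_diff)
    finally show ?case
      using elim by linarith
  qed
qed (auto intro: always_eventually less_le_trans[OF _ measure_nonneg])

lemma (in prob_space) iid_normalized_sum_cdf_tendsto:
  fixes \<xi> :: "nat \<Rightarrow> 'a \<Rightarrow> real"
  assumes indep: "indep_vars (\<lambda>_. borel) \<xi> UNIV"
    and ident: "\<And>j. distr M borel (\<xi> j) = distr M borel (\<xi> 0)"
    and mean_0: "expectation (\<xi> 0) = 0"
    and var_0: "integrable M (\<lambda>\<omega>. (\<xi> 0 \<omega>)^2)" "expectation (\<lambda>\<omega>. (\<xi> 0 \<omega>)^2) = 1"
  shows "(\<lambda>n. prob {\<omega>\<in>space M. (\<Sum>j<n. \<xi> j \<omega>) / sqrt n \<le> t}) \<longlonglongrightarrow> cdf std_normal_distribution t"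
proof -
  define Z where "Z n \<omega> = (\<Sum>j<n. \<xi> j \<omega>) / sqrt n" for n \<omega>
  have [measurable]: "\<xi> j \<in> borel_measurable M" for j
    using indep unfolding indep_vars_def2 by simp
  have [measurable]: "Z n \<in> borel_measurable M" for n
    unfolding Z_def[abs_def] by measurable
  have mean: "expectation (\<xi> j) = 0" for j
  proof -
    have "expectation (\<xi> j) = expectation (\<xi> 0)"
      by (rule identically_distributed_integral(2)[OF ident, where g = "\<lambda>s. s"]) measurable
    then show ?thesis
      using mean_0 by simp
  qed
  have square_integrable: "integrable M (\<lambda>\<omega>. (\<xi> j \<omega>)^2)" for j
    using var_0(1) by (subst identically_distributed_integral(1)[OF ident]) measurable
  have variance: "variance (\<xi> j) = 1^2" for j
  proof -
    have "expectation (\<lambda>\<omega>. (\<xi> j \<omega>)^2) = expectation (\<lambda>\<omega>. (\<xi> 0 \<omega>)^2)"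
      by (rule identically_distributed_integral(2)[OF ident]) measurable
    then show ?thesis
      using mean var_0(2) by simp
  qed
  have "weak_conv_m (\<lambda>n. distr M borel (\<lambda>\<omega>. (\<Sum>j<n. \<xi> j \<omega>) / sqrt (real n * 1^2))) std_normal_distribution"
    by (rule central_limit_theorem_zero_mean[OF indep mean zero_less_one square_integrable variance ident])
  then have "(\<lambda>n. cdf (distr M borel (Z n)) t) \<longlonglongrightarrow> cdf std_normal_distribution t"
    using isCont_cdf_std_normal by (simp add: weak_conv_m_def weak_conv_def Z_def[abs_def])
  moreover have "cdf (distr M borel (Z n)) t = prob {\<omega>\<in>space M. Z n \<omega> \<le> t}" for n
    unfolding cdf_def by (subst measure_distr) (auto simp: vimage_def Int_def conj_commute)
  ultimately show ?thesis
    by (simp add: Z_def)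
qed

lemma (in prob_space) iid_sum_outside_window_tendsto_0:
  fixes \<xi> :: "nat \<Rightarrow> 'a \<Rightarrow> real" and c :: "nat \<Rightarrow> real"
  assumes indep: "indep_vars (\<lambda>_. borel) \<xi> UNIV"
    and ident: "\<And>j. distr M borel (\<xi> j) = distr M borel (\<xi> 0)"
    and mean: "expectation (\<xi> 0) = 0"
    and var: "integrable M (\<lambda>\<omega>. (\<xi> 0 \<omega>)^2)" "expectation (\<lambda>\<omega>. (\<xi> 0 \<omega>)^2) = 1"
    and c: "filterlim (\<lambda>n. c n / sqrt n) at_top sequentially"
  shows "(\<lambda>n. prob {\<omega>\<in>space M. \<not> (x < \<bar>\<Sum>j<n. \<xi> j \<omega>\<bar> \<and> \<bar>\<Sum>j<n. \<xi> j \<omega>\<bar> \<le> c n)}) \<longlonglongrightarrow> 0"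
proof -
  define Z where "Z n \<omega> = (\<Sum>j<n. \<xi> j \<omega>) / sqrt n" for n \<omega>
  have [measurable]: "\<xi> j \<in> borel_measurable M" for j
    using indep unfolding indep_vars_def2 by simp
  have [measurable]: "Z n \<in> borel_measurable M" for n
    unfolding Z_def[abs_def] by measurable
  note cdf = iid_normalized_sum_cdf_tendsto[OF indep ident mean var, folded Z_def]
  have small: "(\<lambda>n. prob {\<omega>\<in>space M. \<bar>Z n \<omega>\<bar> \<le> x / sqrt n}) \<longlonglongrightarrow> 0"
    by (rule prob_abs_le_tendsto_0[OF _ cdf isCont_cdf_std_normal]) (measurable, real_asymp)
  have large: "(\<lambda>n. prob {\<omega>\<in>space M. c n / sqrt n < \<bar>Z n \<omega>\<bar>}) \<longlonglongrightarrow> 0"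
    by (rule prob_abs_gt_tendsto_0[OF _ cdf real_distribution.cdf_lim_at_top_prob[OF real_dist_normal_dist]
          finite_borel_measure.cdf_lim_at_bot[OF real_distribution.finite_borel_measure_M[OF real_dist_normal_dist]] c])
      measurable
  show ?thesis
  proof (rule tendsto_sandwich[OF _ _ tendsto_const tendsto_add[OF small large, simplified]])
    show "\<forall>\<^sub>F n in sequentially. 0 \<le> prob {\<omega>\<in>space M. \<not> (x < \<bar>\<Sum>j<n. \<xi> j \<omega>\<bar> \<and> \<bar>\<Sum>j<n. \<xi> j \<omega>\<bar> \<le> c n)}"
      by simp
    show "\<forall>\<^sub>F n in sequentially. prob {\<omega>\<in>space M. \<not> (x < \<bar>\<Sum>j<n. \<xi> j \<omega>\<bar> \<and> \<bar>\<Sum>j<n. \<xi> j \<omega>\<bar> \<le> c n)}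
        \<le> prob {\<omega>\<in>space M. \<bar>Z n \<omega>\<bar> \<le> x / sqrt n} + prob {\<omega>\<in>space M. c n / sqrt n < \<bar>Z n \<omega>\<bar>}"
      using eventually_gt_at_top[of 0]
    proof eventually_elim
      case (elim n)
      have "\<bar>Z n \<omega>\<bar> = \<bar>\<Sum>j<n. \<xi> j \<omega>\<bar> / sqrt n" for \<omega>
        by (simp add: Z_def abs_div)
      then have "{\<omega>\<in>space M. \<not> (x < \<bar>\<Sum>j<n. \<xi> j \<omega>\<bar> \<and> \<bar>\<Sum>j<n. \<xi> j \<omega>\<bar> \<le> c n)}
          = {\<omega>\<in>space M. \<bar>Z n \<omega>\<bar> \<le> x / sqrt n} \<union> {\<omega>\<in>space M. c n / sqrt n < \<bar>Z n \<omega>\<bar>}"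
        using elim by (auto simp: divide_le_cancel divide_less_cancel)
      then show ?case
        by (simp add: measure_Un_le)
    qed
  qed
qed

theorem lemma2p1:
  fixes M :: "'a measure" and \<xi> :: "nat \<Rightarrow> 'a \<Rightarrow> real" and \<delta> x y :: real
  assumes "prob_space M"
    and rv: "\<And>j. \<xi> j \<in> borel_measurable M"
    and indep: "prob_space.indep_vars M (\<lambda>_. borel) \<xi> UNIV"
    and ident: "\<And>j. distr M borel (\<xi> j) = distr M borel (\<xi> 0)"
    and nondeg: "\<not> (\<exists>c. AE \<omega> in M. \<xi> 0 \<omega> = c)"
    and mean: "integrable M (\<xi> 0)" "prob_space.expectation M (\<xi> 0) = 0"
    and var: "integrable M (\<lambda>\<omega>. (\<xi> 0 \<omega>)^2)" "prob_space.expectation M (\<lambda>\<omega>. (\<xi> 0 \<omega>)^2) = 1"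
    and \<delta>: "\<delta> > 0" "integrable M (\<lambda>\<omega>. \<bar>\<xi> 0 \<omega>\<bar> powr (2 + \<delta>))"
  shows "(\<lambda>n. \<bar>measure M {\<omega>\<in>space M. \<forall>k\<in>{1..n-1}.
                 x < cmod (dft_coeff \<xi> n k \<omega>) \<and> cmod (dft_coeff \<xi> n k \<omega>) \<le> frak_b n * y + frak_a n}
             - measure M {\<omega>\<in>space M. \<forall>k\<in>{0..n-1}.
                 x < cmod (dft_coeff \<xi> n k \<omega>) \<and> cmod (dft_coeff \<xi> n k \<omega>) \<le> frak_b n * y + frak_a n}\<bar>)
         \<longlonglongrightarrow> 0"
proof -
  interpret prob_space M by fact
  define c where "c n = frak_b n * y + frak_a n" for n
  define E where "E n K = {\<omega>\<in>space M. \<forall>k\<in>K. x < cmod (dft_coeff \<xi> n k \<omega>) \<and> cmod (dft_coeff \<xi> n k \<omega>) \<le> c n}"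
    for n K
  define W where "W n = {\<omega>\<in>space M. x < \<bar>\<Sum>j<n. \<xi> j \<omega>\<bar> \<and> \<bar>\<Sum>j<n. \<xi> j \<omega>\<bar> \<le> c n}" for n
  have [measurable]: "\<xi> j \<in> borel_measurable M" for j
    by (rule rv)
  have "{0..n-1} = insert 0 {1..n-1}" for n :: nat
    by auto
  then have "E n {0..n-1} = E n {1..n-1} \<inter> W n" for n
    by (auto simp: E_def W_def cmod_dft_coeff_0)
  moreover have "E n {1..n-1} \<in> sets M" "W n \<in> sets M" for n
    unfolding E_def W_def dft_coeff_def by measurable
  ultimately have bound: "\<bar>prob (E n {1..n-1}) - prob (E n {0..n-1})\<bar> \<le> prob (space M - W n)" for n
    by (simp add: measure_diff_Int_le)
  have "filterlim (\<lambda>n. c n / sqrt n) at_top sequentially"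
    unfolding c_def frak_a_def frak_b_def by real_asymp
  note window = iid_sum_outside_window_tendsto_0[OF indep ident mean(2) var this]
  have compl: "space M - W n = {\<omega>\<in>space M. \<not> (x < \<bar>\<Sum>j<n. \<xi> j \<omega>\<bar> \<and> \<bar>\<Sum>j<n. \<xi> j \<omega>\<bar> \<le> c n)}" for n
    by (auto simp: W_def)
  have "(\<lambda>n. prob (space M - W n)) \<longlonglongrightarrow> 0"
    unfolding compl by (fact window)
  then have "(\<lambda>n. \<bar>prob (E n {1..n-1}) - prob (E n {0..n-1})\<bar>) \<longlonglongrightarrow> 0"
    by (rule tendsto_sandwich[OF always_eventually always_eventually tendsto_const, rotated 2])
      (simp, use bound in blast)
  then show ?thesis
    unfolding E_def c_def .
qed

end
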